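(* Let $p$ be a prime, and let $k,n,m,n_0,m_0$ be nonnegative integers such that $k\ge 1$ and $0\le n_0,m_0\le p-1$. If $p\ge 5$, then $$\binom{np^k+n_0}{mp^k+m_0}\equiv \binom{np^{\lfloor (k-1)/3\rfloor}}{mp^{\lfloor (k-1)/3\rfloor}}\binom{n_0}{m_0}\pmod{p^k}.$$ Furthermore, for $p=2$, $$\binom{n2^k+n_0}{m2^k+m_0}\equiv \binom{n2^{\lfloor k/2\rfloor}}{m2^{\lfloor k/2\rfloor}}\binom{n_0}{m_0}\pmod{2^k},$$ and for $p=3$, $$\binom{n3^k+n_0}{m3^k+m_0}\equiv \binom{n3^{\lfloor (k-1)/2\rfloor}}{m3^{\lfloor (k-1)/2\rfloor}}\binom{n_0}{m_0}\pmod{3^k}.$$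
   Context: $\lfloor a\rfloor$ denotes the greatest integer less than or equal to $a$. Binomial coefficients use the conventions $\binom{0}{0}=1$ and $\binom{l}{r}=0$ if $l<r$. *)

theory Defs
  imports "HOL-Number_Theory.Number_Theory"
begin

end

theory Submission
  imports Defs
begin

text \<open>
  For \<open>Q = p^(r+1)\<close> let \<open>G(t)\<close> be the product of \<open>t Q + i\<close> over the totatives \<open>i\<close> of \<open>Q\<close>.
  Splitting off the multiples of \<open>p\<close> gives \<open>(L Q)! = G(0) \<cdots> G(L-1) \<cdot> p^(L p^r) \<cdot> (L p^r)!\<close>, hence
  \<open>C(nQ, mQ) \<equiv> C(n p^r, m p^r)\<close> modulo every power of \<open>p\<close> modulo which all \<open>G(t)\<close> agree with \<open>G(0)\<close>.
  Pairing \<open>i\<close> with \<open>Q - i\<close> gives \<open>G(t)^2 = \<Prod>\<^sub>i (i (Q - i) + (t^2 + t) Q^2)\<close>, so \<open>G(t)^2 \<equiv> G(0)^2\<close>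
  modulo \<open>Q^2\<close>; and modulo \<open>Q^3\<close> if \<open>gcd Q 6 = 1\<close>, since then the first-order term (the sum over
  \<open>i\<close> of the products of \<open>j (Q - j)\<close> over \<open>j \<noteq> i\<close>) is \<open>-P\<close> times the sum of the inverse squares
  modulo \<open>Q\<close> (\<open>P\<close> the product of all \<open>j (Q - j)\<close>), and that sum is the sum of the squares,
  which \<open>i \<mapsto> 2i\<close> multiplies by 4.
  As \<open>G(t) \<equiv> G(0)\<close> modulo \<open>Q\<close>, square roots can be taken: \<open>G(t) \<equiv> G(0)\<close> modulo \<open>Q^3\<close> for \<open>p \<ge> 5\<close>,
  \<open>Q^2\<close> for \<open>p = 3\<close> and \<open>Q^2/2\<close> for \<open>p = 2\<close>. Iterating the reduction from exponent \<open>k\<close> down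
  and splitting off the last digit with Vandermonde's identity gives the theorem.
\<close>

lemma prod_add_cong_mod_square:
  fixes v :: "'b \<Rightarrow> 'a::unique_euclidean_semiring"
  assumes "finite A"
  shows "[(\<Prod>j\<in>A. v j + d) = (\<Prod>j\<in>A. v j) + d * (\<Sum>i\<in>A. \<Prod>j\<in>A - {i}. v j)] (mod d^2)"
  using assms
proof (induction A rule: finite_induct)
  case empty
  then show ?case by simp
next
  case (insert a A)
  define P where "P = (\<Prod>j\<in>A. v j)"
  define S where "S = (\<Sum>i\<in>A. \<Prod>j\<in>A - {i}. v j)"
  have "(\<Sum>i\<in>A. \<Prod>j\<in>insert a A - {i}. v j) = (\<Sum>i\<in>A. v a * (\<Prod>j\<in>A - {i}. v j))"
  proof (rule sum.cong)
    fix i assume "i \<in> A"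
    then have "insert a A - {i} = insert a (A - {i})" using insert by auto
    then show "(\<Prod>j\<in>insert a A - {i}. v j) = v a * (\<Prod>j\<in>A - {i}. v j)" using insert by simp
  qed simp
  then have S': "(\<Sum>i\<in>insert a A. \<Prod>j\<in>insert a A - {i}. v j) = P + v a * S"
    using insert by (simp add: P_def S_def sum_distrib_left)
  have "(\<Prod>j\<in>insert a A. v j + d) = (v a + d) * (\<Prod>j\<in>A. v j + d)"
    using insert by simp
  also have "[\<dots> = (v a + d) * (P + d * S)] (mod d^2)"
    unfolding P_def S_def by (intro cong_mult cong_refl insert.IH)
  also have "(v a + d) * (P + d * S) = v a * P + d * (P + v a * S) + d^2 * S"
    by (simp add: algebra_simps power2_eq_square)
  also have "[\<dots> = v a * P + d * (P + v a * S) + 0] (mod d^2)"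
    by (intro cong_add cong_refl) (simp add: cong_0_iff)
  finally show ?case using insert by (simp add: S' P_def)
qed

lemma bij_betw_totatives_minus:
  assumes "1 < Q"
  shows "bij_betw (\<lambda>i. Q - i) (totatives Q) (totatives Q)"
proof -
  have maps: "(\<lambda>i. Q - i) \<in> totatives Q \<rightarrow> totatives Q"
  proof
    fix i assume i: "i \<in> totatives Q"
    have "i < Q" using i assms by (rule totatives_less)
    have "gcd (Q - i) Q = gcd i Q" using \<open>i < Q\<close> by (intro gcd_diff2_nat) simp
    then have "coprime (Q - i) Q" using i by (metis in_totatives_iff coprime_iff_gcd_eq_1)
    then show "Q - i \<in> totatives Q" using \<open>i < Q\<close> by (simp add: in_totatives_iff)
  qed
  show ?thesis by (rule bij_betwI[OF maps maps]) (auto dest: totatives_le)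
qed

lemma totatives_cong_imp_eq:
  "1 < Q \<Longrightarrow> i \<in> totatives Q \<Longrightarrow> j \<in> totatives Q \<Longrightarrow> [i = j] (mod Q) \<Longrightarrow> i = j"
  by (metis cong_less_imp_eq_nat totatives_less zero_le)

lemma bij_betw_totatives_mult_mod:
  assumes "1 < Q" and "coprime a Q"
  shows "bij_betw (\<lambda>i. a * i mod Q) (totatives Q) (totatives Q)"
proof -
  have maps: "a * i mod Q \<in> totatives Q" if i: "i \<in> totatives Q" for i
  proof -
    have "coprime (a * i) Q" using assms(2) i by (simp add: in_totatives_iff)
    then have "coprime (a * i mod Q) Q" by (metis coprime_commute coprime_mod_right_iff
        assms(1) not_one_less_zero gr_zeroI)
    moreover have "a * i mod Q \<noteq> 0"
    proof
      assume "a * i mod Q = 0"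
      then have "is_unit Q"
        using \<open>coprime (a * i) Q\<close> by (metis coprime_common_divisor dvd_refl mod_0_imp_dvd)
      then show False using assms(1) by simp
    qed
    ultimately show ?thesis using assms(1) by (simp add: in_totatives_iff less_imp_le)
  qed
  have inj: "inj_on (\<lambda>i. a * i mod Q) (totatives Q)"
  proof (rule inj_onI)
    fix i j assume ij: "i \<in> totatives Q" "j \<in> totatives Q" "a * i mod Q = a * j mod Q"
    then have "[i = j] (mod Q)"
      using assms(2) cong_mult_lcancel_nat unfolding cong_def by blast
    then show "i = j" using ij(1,2) assms(1) by (simp add: totatives_cong_imp_eq)
  qed
  show ?thesis
    unfolding bij_betw_def using endo_inj_surj[OF finite_totatives _ inj] maps inj by blast
qed

lemma totatives_inverse:
  assumes "1 < Q"
  obtains g where "bij_betw g (totatives Q) (totatives Q)"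
    and "\<And>i. i \<in> totatives Q \<Longrightarrow> [i * g i = 1] (mod Q)"
proof -
  have "\<exists>j\<in>totatives Q. [i * j = 1] (mod Q)" if i: "i \<in> totatives Q" for i
  proof -
    obtain x where x: "[i * x = 1] (mod Q)"
      using cong_solve_coprime_nat[of i Q] i by (auto simp: in_totatives_iff)
    then have j: "[i * (x mod Q) = 1] (mod Q)" by (metis cong_def mod_mult_right_eq)
    then have "coprime (x mod Q) Q" using cong_imp_coprime[OF cong_sym[OF j]] by simp
    moreover have "x mod Q \<noteq> 0"
    proof
      assume "x mod Q = 0"
      then show False using j assms by (simp add: cong_def)
    qed
    ultimately have "x mod Q \<in> totatives Q" using assms by (simp add: in_totatives_iff less_imp_le)
    with j show ?thesis by blast
  qed
  then obtain g where g: "\<And>i. i \<in> totatives Q \<Longrightarrow> g i \<in> totatives Q \<and> [i * g i = 1] (mod Q)"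
    by metis
  have "g (g i) = i" if i: "i \<in> totatives Q" for i
  proof -
    have "[g i * g (g i) = g i * i] (mod Q)"
      using g[OF i] g[of "g i"] by (metis cong_sym cong_trans mult.commute)
    then have "[g (g i) = i] (mod Q)"
      using g[OF i] by (auto simp: in_totatives_iff cong_mult_lcancel_nat)
    then show ?thesis using g[of "g i"] g[OF i] i assms by (metis totatives_cong_imp_eq)
  qed
  then have "bij_betw g (totatives Q) (totatives Q)" by (intro bij_betwI[of g _ _ g]) (auto simp: g)
  then show thesis using that g by blast
qed

lemma sum_totatives_square_dvd:
  assumes "1 < Q" and "coprime Q 6"
  shows "Q dvd (\<Sum>i\<in>totatives Q. i^2)"
proof -
  define S where "S = (\<Sum>i\<in>totatives Q. i^2)"
  have "coprime 2 Q" "coprime Q 3"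
    using assms(2) coprime_mult_right_iff[of Q 2 3] by (simp_all add: coprime_commute)
  have "S = (\<Sum>i\<in>totatives Q. (2 * i mod Q)^2)"
    using sum.reindex_bij_betw[OF bij_betw_totatives_mult_mod[OF assms(1) \<open>coprime 2 Q\<close>],
        of "\<lambda>i. i^2"] by (simp add: S_def)
  also have "[\<dots> = (\<Sum>i\<in>totatives Q. (2 * i)^2)] (mod Q)"
    by (intro cong_sum cong_pow) (simp add: cong_def)
  also have "(\<Sum>i\<in>totatives Q. (2 * i)^2) = 4 * S"
    by (simp add: S_def sum_distrib_left power_mult_distrib)
  finally have "[4 * S = S] (mod Q)" by (rule cong_sym)
  then have "Q dvd 4 * S - S" by (simp add: cong_altdef_nat)
  then have "Q dvd 3 * S" by simp
  then show ?thesis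
    using \<open>coprime Q 3\<close> by (simp add: S_def coprime_dvd_mult_right_iff)
qed

lemma sum_prod_totatives_dvd:
  assumes "1 < Q" and "coprime Q 6"
  shows "Q dvd (\<Sum>i\<in>totatives Q. \<Prod>j\<in>totatives Q - {i}. j * (Q - j))"
proof -
  obtain g where g_bij: "bij_betw g (totatives Q) (totatives Q)"
    and g_inv: "\<And>i. i \<in> totatives Q \<Longrightarrow> [i * g i = 1] (mod Q)"
    using totatives_inverse[OF assms(1)] by blast
  define P where "P = (\<Prod>j\<in>totatives Q. j * (Q - j))"
  \<comment> \<open>the summand is \<open>-P g(i)\<^sup>2\<close> modulo \<open>Q\<close>, stated additively to stay in \<open>nat\<close>\<close>
  have summand: "[(\<Prod>j\<in>totatives Q - {i}. j * (Q - j)) + P * g i ^ 2 = 0] (mod Q)"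
    if i: "i \<in> totatives Q" for i
  proof -
    define w where "w = (\<Prod>j\<in>totatives Q - {i}. j * (Q - j))"
    have "P = i * (Q - i) * w" using i by (simp add: P_def w_def prod.remove)
    then have "w + P * g i ^ 2 = w * (i * (Q - i) * g i ^ 2 + 1)" by (simp add: algebra_simps)
    also have "[\<dots> = w * (i * (Q - i) * g i ^ 2 + (i * g i) ^ 2)] (mod Q)"
      using cong_pow[OF g_inv[OF i], of 2] by (intro cong_mult cong_add cong_refl) (simp add: cong_sym)
    also have "i * (Q - i) * g i ^ 2 + (i * g i) ^ 2 = Q * (i * g i ^ 2)"
      using totatives_le[OF i] by (simp add: power2_eq_square algebra_simps diff_mult_distrib2)
    also have "[w * (Q * (i * g i ^ 2)) = 0] (mod Q)" by (simp add: cong_0_iff)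
    finally show ?thesis by (simp add: w_def)
  qed
  have "(\<Sum>i\<in>totatives Q. g i ^ 2) = (\<Sum>i\<in>totatives Q. i ^ 2)"
    using sum.reindex_bij_betw[OF g_bij, of "\<lambda>i. i^2"] .
  then have "Q dvd P * (\<Sum>i\<in>totatives Q. g i ^ 2)"
    using sum_totatives_square_dvd[OF assms] by simp
  moreover have "Q dvd (\<Sum>i\<in>totatives Q. \<Prod>j\<in>totatives Q - {i}. j * (Q - j))
      + P * (\<Sum>i\<in>totatives Q. g i ^ 2)"
    using cong_sum[of "totatives Q", OF summand] by (simp add: sum.distrib sum_distrib_left cong_0_iff)
  ultimately show ?thesis by (simp add: dvd_add_left_iff)
qed

lemma cong_square_imp_cong:
  fixes x y M :: nat
  assumes "coprime (2 * y) M" and "[x = y] (mod M)" and "[x^2 = y^2] (mod M^a)"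
  shows "[x = y] (mod M^a)"
proof -
  have "[x + y = 2 * y] (mod M)"
    using assms(2) by (metis cong_add cong_refl mult_2)
  then have "coprime (x + y) M" using assms(1) coprime_cong_cong_left by blast
  then have "coprime (int x + int y) (int M ^ a)"
    by (metis coprime_int_iff coprime_power_right_iff of_nat_add)
  moreover have "int M ^ a dvd (int x - int y) * (int x + int y)"
    using assms(3) by (simp add: cong_int_iff[symmetric] cong_iff_dvd_diff power2_eq_square algebra_simps)
  ultimately have "int M ^ a dvd int x - int y"
    by (metis coprime_commute coprime_dvd_mult_left_iff)
  then show ?thesis by (simp add: cong_int_iff[symmetric] cong_iff_dvd_diff)
qed

lemma cong_square_imp_cong_two_power:
  fixes x y :: nat
  assumes "odd y" and "[x = y] (mod 4)" and "[x^2 = y^2] (mod 2^Suc e)"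
  shows "[x = y] (mod 2^e)"
proof -
  obtain k where k: "int x - int y = 4 * k"
    using assms(2) by (metis cong_int_iff cong_iff_dvd_diff dvd_def of_nat_numeral)
  define w where "w = int y + 2 * k"
  have "odd w" using assms(1) by (simp add: w_def)
  have "2 ^ Suc e dvd (int x - int y) * (2 * w)"
    using assms(3) k
    by (simp add: cong_int_iff[symmetric] cong_iff_dvd_diff power2_eq_square algebra_simps w_def)
  then have "2 ^ e dvd (int x - int y) * w" by (simp add: mult.left_commute)
  moreover have "coprime w (2 ^ e)" using \<open>odd w\<close> by simp
  ultimately have "2 ^ e dvd int x - int y"
    by (metis coprime_commute coprime_dvd_mult_left_iff)
  then show ?thesis by (simp add: cong_int_iff[symmetric] cong_iff_dvd_diff)
qed

definition totatives_prod :: "nat \<Rightarrow> nat \<Rightarrow> nat" where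
  "totatives_prod Q t = (\<Prod>i\<in>totatives Q. t * Q + i)"

lemma totatives_prod_cong: "[totatives_prod Q t = totatives_prod Q 0] (mod Q)"
  unfolding totatives_prod_def by (intro cong_prod) (simp add: cong_def)

lemma coprime_totatives_prod: "coprime (totatives_prod Q 0) Q"
  unfolding totatives_prod_def by (auto intro!: prod_coprime_left simp: in_totatives_iff)

lemma totatives_prod_square:
  assumes "1 < Q"
  shows "totatives_prod Q t ^ 2 = (\<Prod>i\<in>totatives Q. i * (Q - i) + (t^2 + t) * Q^2)"
proof -
  have "(\<Prod>i\<in>totatives Q. t * Q + (Q - i)) = totatives_prod Q t"
    using prod.reindex_bij_betw[OF bij_betw_totatives_minus[OF assms], of "\<lambda>i. t * Q + i"]
    by (simp add: totatives_prod_def)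
  then have "totatives_prod Q t ^ 2 = (\<Prod>i\<in>totatives Q. (t * Q + i) * (t * Q + (Q - i)))"
    by (simp add: power2_eq_square totatives_prod_def prod.distrib)
  also have "\<dots> = (\<Prod>i\<in>totatives Q. i * (Q - i) + (t^2 + t) * Q^2)"
  proof (rule prod.cong[OF refl])
    fix i assume "i \<in> totatives Q"
    then obtain c where "Q = i + c" using totatives_le le_iff_add by blast
    then show "(t * Q + i) * (t * Q + (Q - i)) = i * (Q - i) + (t^2 + t) * Q^2"
      by (simp add: power2_eq_square algebra_simps)
  qed
  finally show ?thesis .
qed

lemma totatives_prod_square_cong:
  assumes "1 < Q"
  shows "[totatives_prod Q t ^ 2 = totatives_prod Q 0 ^ 2] (mod Q^2)"
proof -
  have "[(\<Prod>i\<in>totatives Q. i * (Q - i) + (t^2 + t) * Q^2) = (\<Prod>i\<in>totatives Q. i * (Q - i) + 0)] (mod Q^2)"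
    by (intro cong_prod cong_add cong_refl) (simp add: cong_0_iff)
  then show ?thesis by (simp add: totatives_prod_square[OF assms])
qed

lemma totatives_prod_square_cong_cube:
  assumes "1 < Q" and "coprime Q 6"
  shows "[totatives_prod Q t ^ 2 = totatives_prod Q 0 ^ 2] (mod Q^3)"
proof -
  define d where "d = (t^2 + t) * Q^2"
  define \<sigma> where "\<sigma> = (\<Sum>i\<in>totatives Q. \<Prod>j\<in>totatives Q - {i}. j * (Q - j))"
  have "[totatives_prod Q t ^ 2 = totatives_prod Q 0 ^ 2 + d * \<sigma>] (mod d^2)"
    using prod_add_cong_mod_square[OF finite_totatives, of "\<lambda>j. j * (Q - j)" d Q]
    by (simp add: totatives_prod_square[OF assms(1)] d_def \<sigma>_def)
  moreover have "Q^3 dvd d^2" by (simp add: d_def power_mult_distrib dvd_mult2 le_imp_power_dvd flip: power_mult)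
  ultimately have "[totatives_prod Q t ^ 2 = totatives_prod Q 0 ^ 2 + d * \<sigma>] (mod Q^3)"
    by (rule cong_dvd_modulus_nat)
  moreover have "Q^3 dvd d * \<sigma>"
    using sum_prod_totatives_dvd[OF assms] by (simp add: d_def \<sigma>_def power2_eq_square power3_eq_cube mult_dvd_mono)
  then have "[totatives_prod Q 0 ^ 2 + d * \<sigma> = totatives_prod Q 0 ^ 2 + 0] (mod Q^3)"
    by (intro cong_add cong_refl) (simp add: cong_0_iff)
  ultimately show ?thesis by (simp add: cong_trans)
qed

lemma totatives_prod_cong_cube:
  assumes "1 < Q" and "coprime Q 6"
  shows "[totatives_prod Q t = totatives_prod Q 0] (mod Q^3)"
proof (rule cong_square_imp_cong[OF _ totatives_prod_cong totatives_prod_square_cong_cube[OF assms]])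
  have "coprime 2 Q" using assms(2) coprime_mult_right_iff[of Q 2 3] by (simp add: coprime_commute)
  then show "coprime (2 * totatives_prod Q 0) Q" using coprime_totatives_prod by simp
qed

lemma totatives_prod_cong_square:
  assumes "1 < Q" and "odd Q"
  shows "[totatives_prod Q t = totatives_prod Q 0] (mod Q^2)"
proof (rule cong_square_imp_cong[OF _ totatives_prod_cong totatives_prod_square_cong[OF assms(1)]])
  show "coprime (2 * totatives_prod Q 0) Q" using assms(2) coprime_totatives_prod by simp
qed

lemma totatives_prod_two_power_cong:
  "[totatives_prod (2^r) t = totatives_prod (2^r) 0] (mod 2^(2*r - 1))"
proof (cases "r \<le> 1")
  case True
  then have "(2::nat)^(2*r - 1) dvd 2^r" by (intro le_imp_power_dvd) simp
  then show ?thesis using totatives_prod_cong cong_dvd_modulus_nat by blast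
next
  case False
  have "odd (totatives_prod (2^r) 0)"
    using coprime_totatives_prod[of "2^r"] False by simp
  moreover have "[totatives_prod (2^r) t = totatives_prod (2^r) 0] (mod 4)"
  proof (rule cong_dvd_modulus_nat[OF totatives_prod_cong])
    have "(2::nat)^2 dvd 2^r" using False by (intro le_imp_power_dvd) simp
    then show "4 dvd (2::nat)^r" by simp
  qed
  moreover have "[totatives_prod (2^r) t ^ 2 = totatives_prod (2^r) 0 ^ 2] (mod 2^Suc (2*r - 1))"
  proof -
    have "Suc (2*r - 1) = 2 * r" using False by simp
    moreover have "(1::nat) < 2^r" using False by (intro one_less_power) auto
    ultimately show ?thesis using totatives_prod_square_cong[of "2^r" t] by (simp flip: power_mult, simp add: mult.commute)
  qed
  ultimately show ?thesis by (rule cong_square_imp_cong_two_power)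
qed

lemma fact_add_eq_prod: "fact (a + b) = (fact a :: nat) * (\<Prod>i\<in>{0<..b}. a + i)"
proof (induction b)
  case (Suc b)
  have "{0<..Suc b} = insert (Suc b) {0<..b}" by auto
  then show ?case using Suc by (simp add: algebra_simps)
qed simp

lemma prod_interval_prime_power_Suc:
  assumes "prime p"
  shows "(\<Prod>i\<in>{0<..p^Suc r}. x + i) = (\<Prod>i\<in>totatives (p^Suc r). x + i) * (\<Prod>j\<in>{0<..p^r}. x + p * j)"
proof -
  have sub: "(\<lambda>j. p * j) ` {0<..p^r} \<subseteq> {0<..p^Suc r}"
    using prime_gt_0_nat[OF assms] by auto
  have inj: "inj_on (\<lambda>j. p * j) {0<..p^r}"
    using prime_gt_0_nat[OF assms] by (auto simp: inj_on_def)
  have "(\<Prod>i\<in>{0<..p^Suc r}. x + i)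
      = (\<Prod>i\<in>{0<..p^Suc r} - (\<lambda>j. p * j) ` {0<..p^r}. x + i) * (\<Prod>i\<in>(\<lambda>j. p * j) ` {0<..p^r}. x + i)"
    by (rule prod.subset_diff[OF sub finite_greaterThanAtMost])
  also have "{0<..p^Suc r} - (\<lambda>j. p * j) ` {0<..p^r} = totatives (p^Suc r)"
    by (rule totatives_prime_power_Suc[OF assms, symmetric])
  finally show ?thesis by (simp add: prod.reindex[OF inj])
qed

lemma fact_mult_prime_power_Suc:
  assumes "prime p"
  shows "fact (L * p^Suc r) = (\<Prod>t<L. totatives_prod (p^Suc r) t) * p^(L * p^r) * fact (L * p^r)"
proof (induction L)
  case (Suc L)
  have "(\<Prod>j\<in>{0<..p^r}. L * p^Suc r + p * j) = (\<Prod>j\<in>{0<..p^r}. p * (L * p^r + j))"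
    by (simp add: algebra_simps)
  also have "\<dots> = p^(p^r) * (\<Prod>j\<in>{0<..p^r}. L * p^r + j)"
    by (simp add: prod.distrib)
  finally have "(\<Prod>j\<in>{0<..p^r}. L * p^Suc r + p * j) = p^(p^r) * (\<Prod>j\<in>{0<..p^r}. L * p^r + j)" .
  then have block: "(\<Prod>i\<in>{0<..p^Suc r}. L * p^Suc r + i)
      = totatives_prod (p^Suc r) L * p^(p^r) * (\<Prod>j\<in>{0<..p^r}. L * p^r + j)"
    using prod_interval_prime_power_Suc[OF assms, where r = r and x = "L * p^Suc r"]
    unfolding totatives_prod_def by (simp only: mult.assoc)
  have "fact (Suc L * p^Suc r) = fact (L * p^Suc r) * (\<Prod>i\<in>{0<..p^Suc r}. L * p^Suc r + i)"
    unfolding mult_Suc add.commute[of "p^Suc r"] by (rule fact_add_eq_prod)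
  also have "\<dots> = (\<Prod>t<Suc L. totatives_prod (p^Suc r) t) * p^(Suc L * p^r)
      * (fact (L * p^r) * (\<Prod>j\<in>{0<..p^r}. L * p^r + j))"
    unfolding Suc.IH block by (simp add: power_add mult_ac)
  also have "fact (L * p^r) * (\<Prod>j\<in>{0<..p^r}. L * p^r + j) = fact (Suc L * p^r)"
    unfolding mult_Suc add.commute[of "p^r"] by (rule fact_add_eq_prod[symmetric])
  finally show ?case .
qed simp

lemma binomial_mult_prime_power_Suc:
  assumes "prime p" and "m \<le> n"
  shows "((n * p^Suc r) choose (m * p^Suc r)) * (\<Prod>t<m. totatives_prod (p^Suc r) t)
           * (\<Prod>t<n - m. totatives_prod (p^Suc r) t)
         = ((n * p^r) choose (m * p^r)) * (\<Prod>t<n. totatives_prod (p^Suc r) t)"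
proof -
  define A where "A L = (\<Prod>t<L. totatives_prod (p^Suc r) t)" for L
  define F where "F L = p^(L * p^r) * fact (L * p^r)" for L :: nat
  have fact: "fact (L * p^Suc r) = A L * F L" for L
    using fact_mult_prime_power_Suc[OF assms(1)] by (simp add: A_def F_def mult.assoc)
  have split: "fact (n * q) = fact (m * q) * fact ((n - m) * q) * ((n * q) choose (m * q))" for q
    using binomial_fact_lemma[of "m * q" "n * q"] assms(2) by (simp add: diff_mult_distrib)
  have "p^(n * p^r) = p^(m * p^r) * p^((n - m) * p^r)"
    using assms(2) by (simp add: le_add_diff_inverse flip: power_add add_mult_distrib)
  then have "F n = F m * F (n - m) * ((n * p^r) choose (m * p^r))"
    using split[of "p^r"] by (simp add: F_def)
  then have "A n * F n = A n * F m * F (n - m) * ((n * p^r) choose (m * p^r))" by simp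
  also have "A n * F n = A m * F m * (A (n - m) * F (n - m)) * ((n * p^Suc r) choose (m * p^Suc r))"
    using split[of "p^Suc r"] by (simp flip: fact)
  finally have "(((n * p^Suc r) choose (m * p^Suc r)) * A m * A (n - m)) * (F m * F (n - m))
      = (((n * p^r) choose (m * p^r)) * A n) * (F m * F (n - m))"
    by (simp add: mult_ac)
  moreover have "F m * F (n - m) \<noteq> 0"
    using prime_gt_0_nat[OF assms(1)] by (simp add: F_def)
  ultimately show ?thesis by (simp add: A_def)
qed

lemma binomial_mult_prime_power_Suc_cong:
  assumes "prime p"
    and cong: "\<And>t. [totatives_prod (p^Suc r) t = totatives_prod (p^Suc r) 0] (mod M)"
    and coprime: "coprime (totatives_prod (p^Suc r) 0) M"
  shows "[(n * p^Suc r) choose (m * p^Suc r) = (n * p^r) choose (m * p^r)] (mod M)"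
proof (cases "m \<le> n")
  case False
  then show ?thesis using prime_gt_0_nat[OF assms(1)] by (simp add: binomial_eq_0)
next
  case True
  define g where "g = totatives_prod (p^Suc r) 0"
  have prod_cong: "[(\<Prod>t<L. totatives_prod (p^Suc r) t) = g^L] (mod M)" for L
    using cong_prod[of "{..<L}", OF cong] by (simp add: g_def)
  have "[((n * p^Suc r) choose (m * p^Suc r)) * g^n = ((n * p^r) choose (m * p^r)) * g^n] (mod M)"
  proof -
    have "[((n * p^Suc r) choose (m * p^Suc r)) * g^m * g^(n - m)
        = ((n * p^Suc r) choose (m * p^Suc r)) * (\<Prod>t<m. totatives_prod (p^Suc r) t)
            * (\<Prod>t<n - m. totatives_prod (p^Suc r) t)] (mod M)"
      by (intro cong_mult cong_refl cong_sym[OF prod_cong])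
    then have "[((n * p^Suc r) choose (m * p^Suc r)) * g^m * g^(n - m)
        = ((n * p^r) choose (m * p^r)) * (\<Prod>t<n. totatives_prod (p^Suc r) t)] (mod M)"
      by (simp only: binomial_mult_prime_power_Suc[OF assms(1) True])
    moreover have "[((n * p^r) choose (m * p^r)) * (\<Prod>t<n. totatives_prod (p^Suc r) t)
        = ((n * p^r) choose (m * p^r)) * g^n] (mod M)"
      by (intro cong_mult cong_refl prod_cong)
    ultimately show ?thesis using True by (simp add: mult.assoc cong_trans flip: power_add)
  qed
  moreover have "coprime (g^n) M" using coprime by (simp add: g_def)
  ultimately show ?thesis by (simp add: cong_mult_rcancel_nat)
qed

lemma binomial_low_digits_cong:
  assumes "prime p" and "n0 < p" and "m0 < p"
  shows "[(n * p^k + n0) choose (m * p^k + m0) = ((n * p^k) choose (m * p^k)) * (n0 choose m0)] (mod p^k)"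
proof (cases "k = 0")
  case False
  define A where "A = n * p^k"
  define B where "B = m * p^k"
  define s where "s = B + m0"
  have "p dvd B" using False by (simp add: B_def)
  have "(A + n0) choose s = (\<Sum>i\<le>s. (n0 choose i) * (A choose (s - i)))"
    using vandermonde[of n0 A s] by (simp add: add.commute)
  also have "\<dots> = (n0 choose m0) * (A choose B) + (\<Sum>i\<in>{..s} - {m0}. (n0 choose i) * (A choose (s - i)))"
    by (subst sum.remove[of _ m0]) (auto simp: s_def)
  finally have expand: "(A + n0) choose s
      = (n0 choose m0) * (A choose B) + (\<Sum>i\<in>{..s} - {m0}. (n0 choose i) * (A choose (s - i)))" .
  \<comment> \<open>\<open>p^k\<close> divides \<open>C(A, j)\<close> unless \<open>p\<close> divides \<open>j\<close>, as \<open>j C(A, j) = A C(A - 1, j - 1)\<close>\<close>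
  have "p^k dvd (n0 choose i) * (A choose (s - i))" if i: "i \<in> {..s} - {m0}" for i
  proof (cases "i \<le> n0")
    case True
    have "\<not> p dvd s - i"
    proof
      assume dvd: "p dvd s - i"
      show False
      proof (cases "i < m0")
        case True
        then have "s - i = B + (m0 - i)" by (simp add: s_def)
        then have "p dvd m0 - i" using dvd \<open>p dvd B\<close> by (simp add: dvd_add_right_iff)
        then show False using True assms(3) by (auto dest: dvd_imp_le)
      next
        case False
        then have "B = (s - i) + (i - m0)" using i by (auto simp: s_def)
        then have "p dvd i - m0" using dvd \<open>p dvd B\<close> by (metis dvd_add_right_iff)
        then show False using False i \<open>i \<le> n0\<close> assms(2) by (auto dest: dvd_imp_le)
      qed
    qed
    then have "0 < s - i" by (metis dvd_0_right gr0I)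
    then have "(s - i) * (A choose (s - i)) = A * ((A - 1) choose (s - i - 1))"
      by (rule times_binomial_minus1_eq)
    then have "p^k dvd (s - i) * (A choose (s - i))" by (simp add: A_def)
    moreover have "coprime (p^k) (s - i)"
      using \<open>\<not> p dvd s - i\<close> assms(1) by (simp add: prime_imp_coprime)
    ultimately show ?thesis by (simp add: coprime_dvd_mult_right_iff)
  qed (simp add: binomial_eq_0)
  then have "[(\<Sum>i\<in>{..s} - {m0}. (n0 choose i) * (A choose (s - i))) = 0] (mod p^k)"
    unfolding cong_0_iff by (rule dvd_sum)
  then have "[(A + n0) choose s = (n0 choose m0) * (A choose B) + 0] (mod p^k)"
    unfolding expand by (intro cong_add cong_refl)
  then show ?thesis by (simp add: A_def B_def s_def mult.commute)
qed simp

lemma binomial_digit_reduction_cong: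
  assumes "prime p" and "n0 < p" and "m0 < p" and "e \<le> k"
    and cong: "\<And>r t. e \<le> r \<Longrightarrow> r < k \<Longrightarrow>
      [totatives_prod (p^Suc r) t = totatives_prod (p^Suc r) 0] (mod p^k)"
  shows "[(n * p^k + n0) choose (m * p^k + m0) = ((n * p^e) choose (m * p^e)) * (n0 choose m0)] (mod p^k)"
proof -
  have "[(n * p^j) choose (m * p^j) = (n * p^e) choose (m * p^e)] (mod p^k)" if "e \<le> j" "j \<le> k" for j
    using that
  proof (induction j rule: dec_induct)
    case (step j)
    have "coprime (totatives_prod (p^Suc j) 0) (p^k)"
      using coprime_totatives_prod[of "p^Suc j"] by simp
    then have "[(n * p^Suc j) choose (m * p^Suc j) = (n * p^j) choose (m * p^j)] (mod p^k)"
      using step by (intro binomial_mult_prime_power_Suc_cong[OF assms(1)] cong) auto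
    then show ?case using step by (auto intro: cong_trans)
  qed simp
  then have "[((n * p^k) choose (m * p^k)) * (n0 choose m0) = ((n * p^e) choose (m * p^e)) * (n0 choose m0)] (mod p^k)"
    using assms(4) by (intro cong_mult cong_refl) simp
  with binomial_low_digits_cong[OF assms(1-3)] show ?thesis by (rule cong_trans)
qed

theorem mainTheorem1:
  fixes p k n m n0 m0 :: nat
  assumes "prime p" and "k \<ge> 1" and "n0 \<le> p - 1" and "m0 \<le> p - 1"
  shows "(p \<ge> 5 \<longrightarrow>
           [(n * p ^ k + n0) choose (m * p ^ k + m0)
             = ((n * p ^ ((k - 1) div 3)) choose (m * p ^ ((k - 1) div 3))) * (n0 choose m0)] (mod p ^ k))
       \<and> (p = 2 \<longrightarrow>
           [(n * 2 ^ k + n0) choose (m * 2 ^ k + m0)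
             = ((n * 2 ^ (k div 2)) choose (m * 2 ^ (k div 2))) * (n0 choose m0)] (mod 2 ^ k))
       \<and> (p = 3 \<longrightarrow>
           [(n * 3 ^ k + n0) choose (m * 3 ^ k + m0)
             = ((n * 3 ^ ((k - 1) div 2)) choose (m * 3 ^ ((k - 1) div 2))) * (n0 choose m0)] (mod 3 ^ k))"
proof (intro conjI impI)
  have p: "1 < p" "n0 < p" "m0 < p"
    using assms(1,3,4) prime_gt_1_nat[OF assms(1)] by simp_all
  have Q: "1 < p^Suc r" for r using p(1) by (intro one_less_power) auto
  have dvd: "p^k dvd (p^Suc r)^e" if "k \<le> Suc r * e" for r e
    unfolding power_mult[symmetric] using that by (rule le_imp_power_dvd)
  show "[(n * p^k + n0) choose (m * p^k + m0)
      = ((n * p^((k - 1) div 3)) choose (m * p^((k - 1) div 3))) * (n0 choose m0)] (mod p^k)" if "p \<ge> 5"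
  proof (rule binomial_digit_reduction_cong[OF assms(1) p(2,3)])
    have "\<not> p dvd 6" using \<open>p \<ge> 5\<close> prime_dvd_mult_nat[OF assms(1), of 2 3] by (auto dest: dvd_imp_le)
    then have "coprime (p^Suc r) 6" for r using assms(1) by (simp add: prime_imp_coprime)
    then show "[totatives_prod (p^Suc r) t = totatives_prod (p^Suc r) 0] (mod p^k)"
      if "(k - 1) div 3 \<le> r" for r t
    proof (rule cong_dvd_modulus_nat[OF totatives_prod_cong_cube[OF Q]])
      show "p^k dvd (p^Suc r)^3" by (rule dvd) (use that in presburger)
    qed
  qed simp
  show "[(n * 3^k + n0) choose (m * 3^k + m0)
      = ((n * 3^((k - 1) div 2)) choose (m * 3^((k - 1) div 2))) * (n0 choose m0)] (mod 3^k)" if "p = 3"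
  proof (rule binomial_digit_reduction_cong[of 3])
    show "[totatives_prod (3^Suc r) t = totatives_prod (3^Suc r) 0] (mod 3^k)"
      if "(k - 1) div 2 \<le> r" for r t
    proof (rule cong_dvd_modulus_nat[OF totatives_prod_cong_square])
      show "1 < (3::nat)^Suc r" using Q[of r] \<open>p = 3\<close> by simp
      show "odd ((3::nat)^Suc r)" by simp
      have "k \<le> Suc r * 2" using that by presburger
      then show "3^k dvd ((3::nat)^Suc r)^2" using dvd[of r 2] \<open>p = 3\<close> by simp
    qed
  qed (use p \<open>p = 3\<close> in auto)
  show "[(n * 2^k + n0) choose (m * 2^k + m0)
      = ((n * 2^(k div 2)) choose (m * 2^(k div 2))) * (n0 choose m0)] (mod 2^k)" if "p = 2"
  proof (rule binomial_digit_reduction_cong[of 2])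
    show "[totatives_prod (2^Suc r) t = totatives_prod (2^Suc r) 0] (mod 2^k)"
      if "k div 2 \<le> r" for r t
    proof (rule cong_dvd_modulus_nat[OF totatives_prod_two_power_cong])
      show "2^k dvd (2::nat)^(2 * Suc r - 1)" by (rule le_imp_power_dvd) (use that in presburger)
    qed
  qed (use p \<open>p = 2\<close> in auto)
qed

end
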